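(* Let $S$ be a connected graph. Then every connected $S$-free graph is super-edge-connected if and only if $S$ is an induced subgraph of $P_3$.
   Context: All graphs are finite and simple. $P_n$ denotes the path on $n$ vertices. For a graph $S$, a graph $G$ is $S$-free if $G$ has no induced subgraph isomorphic to $S$. An edge-cut of a connected graph $G$ is a set $F\subseteq E(G)$ such that $G-F$ is disconnected; the edge-connectivity $\kappa'(G)$ is the minimum size of an edge-cut. A connected graph $G$ is super-edge-connected if every minimum edge-cut of $G$ is the set of all edges incident with some single vertex, i.e. every minimum edge-cut isolates a vertex. *)

theory Defs
  imports Main
begin

type_synonym 'a ugraph = "'a set \<times> 'a set set"

definition graph :: "'a ugraph \<Rightarrow> bool" where
  "graph G \<longleftrightarrow> finite (fst G) \<and> (\<forall>e\<in>snd G. e \<subseteq> fst G \<and> card e = 2)"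

definition adj :: "'a ugraph \<Rightarrow> 'a \<Rightarrow> 'a \<Rightarrow> bool" where
  "adj G u v \<longleftrightarrow> {u, v} \<in> snd G"

definition connected :: "'a ugraph \<Rightarrow> bool" where
  "connected G \<longleftrightarrow> fst G \<noteq> {} \<and> (\<forall>u\<in>fst G. \<forall>v\<in>fst G. (adj G)\<^sup>*\<^sup>* u v)"

definition induced_subgraph :: "'b ugraph \<Rightarrow> 'a ugraph \<Rightarrow> bool" where
  "induced_subgraph S G \<longleftrightarrow> (\<exists>f. inj_on f (fst S) \<and> f ` fst S \<subseteq> fst G \<and>
      (\<forall>u\<in>fst S. \<forall>v\<in>fst S. adj S u v \<longleftrightarrow> adj G (f u) (f v)))"

definition free :: "'b ugraph \<Rightarrow> 'a ugraph \<Rightarrow> bool" where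
  "free S G \<longleftrightarrow> \<not> induced_subgraph S G"

definition path_graph :: "nat \<Rightarrow> nat ugraph" where
  "path_graph n = ({0..<n}, {{i, i + 1} | i. i + 1 < n})"

definition edge_cut :: "'a ugraph \<Rightarrow> 'a set set \<Rightarrow> bool" where
  "edge_cut G F \<longleftrightarrow> F \<subseteq> snd G \<and> \<not> connected (fst G, snd G - F)"

definition edge_connectivity :: "'a ugraph \<Rightarrow> nat" where
  "edge_connectivity G = (LEAST k. \<exists>F. edge_cut G F \<and> card F = k)"

definition min_edge_cut :: "'a ugraph \<Rightarrow> 'a set set \<Rightarrow> bool" where
  "min_edge_cut G F \<longleftrightarrow> edge_cut G F \<and> card F = edge_connectivity G"

definition super_edge_connected :: "'a ugraph \<Rightarrow> bool" where
  "super_edge_connected G \<longleftrightarrow> connected G \<and>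
     (\<forall>F. min_edge_cut G F \<longrightarrow> (\<exists>v\<in>fst G. F = {e\<in>snd G. v \<in> e}))"

end

theory Submission
  imports Defs
begin

text \<open>
  If S is an induced subgraph of P3, an S-free graph is P3-free, and a connected P3-free graph
  is complete. In a complete graph on n vertices an edge cut separating a side A from V - A
  contains all |A| * |V - A| \<ge> n - 1 edges between them, with equality only when one side is a
  single vertex; so the minimum edge cuts are exactly the vertex stars.

  Conversely, P4 (cut the middle edge) and C4 (cut two opposite edges) are connected but not
  super-edge-connected, so S must be an induced subgraph of both. Hence S is triangle-free and
  has at most three vertices (P4 and C4 both have four vertices but different numbers of
  edges), and a connected triangle-free graph on at most three vertices is an induced subgraph
  of P3.
\<close>

lemma adj_commute: "adj G u v \<longleftrightarrow> adj G v u"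
  by (simp add: adj_def insert_commute)

lemma adj_in_vertices:
  assumes "graph G" "adj G u v"
  shows "u \<in> fst G" "v \<in> fst G" "u \<noteq> v"
  using assms unfolding graph_def adj_def by fastforce+

lemma adj_irrefl: "graph G \<Longrightarrow> \<not> adj G u u"
  by (metis adj_in_vertices(3))

lemma rtranclp_adj_sym: "(adj G)\<^sup>*\<^sup>* u v \<Longrightarrow> (adj G)\<^sup>*\<^sup>* v u"
  by (induction rule: rtranclp_induct)
    (auto, metis adj_commute converse_rtranclp_into_rtranclp)

lemma rtranclp_closed:
  assumes "R\<^sup>*\<^sup>* u v" "u \<in> A" "\<And>x y. R x y \<Longrightarrow> x \<in> A \<Longrightarrow> y \<in> A"
  shows "v \<in> A"
  using assms by (induction rule: rtranclp_induct) auto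

lemma connected_has_neighbour:
  assumes "graph G" "connected G" "u \<in> fst G" "v \<in> fst G" "u \<noteq> v"
  obtains w where "adj G u w"
proof -
  have "(adj G)\<^sup>*\<^sup>* u v" using assms(2-4) unfolding connected_def by blast
  then show ?thesis using assms(5) that by (cases rule: converse_rtranclpE) auto
qed

lemma connected_if_spanning_path4:
  assumes "fst G = {a, b, c, d}" "adj G a b" "adj G b c" "adj G c d"
  shows "connected G"
proof -
  have ab: "(adj G)\<^sup>*\<^sup>* a b" using assms(2) by blast
  have ac: "(adj G)\<^sup>*\<^sup>* a c" using ab assms(3) by (rule rtranclp.rtrancl_into_rtrancl)
  have ad: "(adj G)\<^sup>*\<^sup>* a d" using ac assms(4) by (rule rtranclp.rtrancl_into_rtrancl)
  have from_a: "(adj G)\<^sup>*\<^sup>* a x" if "x \<in> fst G" for x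
    using that ab ac ad unfolding assms(1) by blast
  show ?thesis unfolding connected_def
  proof (intro conjI ballI)
    show "fst G \<noteq> {}" using assms(1) by blast
  next
    fix x y assume "x \<in> fst G" "y \<in> fst G"
    then show "(adj G)\<^sup>*\<^sup>* x y" by (meson from_a rtranclp_adj_sym rtranclp_trans)
  qed
qed

lemma adj_path_graph: "adj (path_graph n) i j \<longleftrightarrow> (j = i + 1 \<or> i = j + 1) \<and> max i j < n"
  unfolding adj_def path_graph_def by (auto simp: doubleton_eq_iff)

lemma vertices_path_graph: "fst (path_graph n) = {0..<n}"
  by (simp add: path_graph_def)

lemma path_graph_4: "path_graph 4 = ({0, 1, 2, 3}, {{0, 1}, {1, 2}, {2, 3}})"
  unfolding path_graph_def by (auto simp: numeral_eq_Suc less_Suc_eq)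

lemma induced_subgraph_trans:
  assumes "induced_subgraph S T" "induced_subgraph T G"
  shows "induced_subgraph S G"
proof -
  obtain f where f: "inj_on f (fst S)" "f ` fst S \<subseteq> fst T"
      "\<forall>u\<in>fst S. \<forall>v\<in>fst S. adj S u v \<longleftrightarrow> adj T (f u) (f v)"
    using assms(1) unfolding induced_subgraph_def by blast
  obtain g where g: "inj_on g (fst T)" "g ` fst T \<subseteq> fst G"
      "\<forall>u\<in>fst T. \<forall>v\<in>fst T. adj T u v \<longleftrightarrow> adj G (g u) (g v)"
    using assms(2) unfolding induced_subgraph_def by blast
  have "inj_on (g \<circ> f) (fst S)" using f g by (meson comp_inj_on inj_on_subset)
  moreover have "(g \<circ> f) ` fst S \<subseteq> fst G" using f g by (auto simp: image_subset_iff)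
  moreover have "\<forall>u\<in>fst S. \<forall>v\<in>fst S. adj S u v \<longleftrightarrow> adj G ((g \<circ> f) u) ((g \<circ> f) v)"
    using f g by (auto simp: image_subset_iff)
  ultimately show ?thesis unfolding induced_subgraph_def by blast
qed

lemma path3_induced_subgraphI:
  assumes "graph G" "adj G x y" "adj G y z" "\<not> adj G x z" "x \<noteq> z"
  shows "induced_subgraph (path_graph 3) G"
proof -
  define h where "h i = (if i = 0 then x else if i = 1 then y else z)" for i :: nat
  have V: "fst (path_graph 3) = {0, 1, 2}" by (auto simp: vertices_path_graph)
  have "x \<noteq> y" "y \<noteq> z" "x \<in> fst G" "y \<in> fst G" "z \<in> fst G"
    using adj_in_vertices[OF assms(1)] assms(2,3) by blast+
  then have "inj_on h {0, 1, 2}" "h ` {0, 1, 2} \<subseteq> fst G"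
    using \<open>x \<noteq> z\<close> by (auto simp: h_def inj_on_def)
  moreover have "\<forall>u\<in>{0, 1, 2}. \<forall>v\<in>{0, 1, 2}. adj (path_graph 3) u v \<longleftrightarrow> adj G (h u) (h v)"
    using assms(2-4) adj_irrefl[OF assms(1)] by (auto simp: adj_path_graph h_def adj_commute)
  ultimately show ?thesis unfolding induced_subgraph_def V by blast
qed

lemma induced_subgraph_path3I:
  assumes "graph S" "fst S = {a, b, c}" "a \<noteq> b" "b \<noteq> c" "a \<noteq> c"
    and "adj S a b" "adj S b c" "\<not> adj S a c"
  shows "induced_subgraph S (path_graph 3)"
proof -
  define h where "h x = (if x = a then 0 else if x = b then 1 else (2::nat))" for x
  have "inj_on h {a, b, c}" "h ` {a, b, c} \<subseteq> fst (path_graph 3)"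
    using assms(3-5) by (auto simp: h_def inj_on_def vertices_path_graph)
  moreover have "\<forall>u\<in>{a, b, c}. \<forall>v\<in>{a, b, c}. adj S u v \<longleftrightarrow> adj (path_graph 3) (h u) (h v)"
    using assms(3-8) adj_irrefl[OF assms(1)] by (auto simp: adj_path_graph h_def adj_commute)
  ultimately show ?thesis unfolding induced_subgraph_def assms(2) by blast
qed

definition complete :: "'a ugraph \<Rightarrow> bool" where
  "complete G \<longleftrightarrow> (\<forall>u\<in>fst G. \<forall>v\<in>fst G. u \<noteq> v \<longrightarrow> adj G u v)"

lemma connected_path3_free_complete:
  assumes "graph G" "connected G" "\<not> induced_subgraph (path_graph 3) G"
  shows "complete G"
proof -
  have "y = x \<or> adj G x y" if "(adj G)\<^sup>*\<^sup>* x y" for x y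
    using that
  proof (induction rule: rtranclp_induct)
    case (step y z)
    then show ?case
      using path3_induced_subgraphI[OF assms(1), of x y z] assms(3) by (auto simp: adj_commute)
  qed simp
  then show ?thesis using assms(2) unfolding connected_def complete_def by blast
qed

lemma finite_edges: "graph G \<Longrightarrow> finite (snd G)"
  unfolding graph_def by (auto intro: finite_subset[of _ "Pow (fst G)"])

definition incident_edges :: "'a ugraph \<Rightarrow> 'a \<Rightarrow> 'a set set" where
  "incident_edges G v = {e \<in> snd G. v \<in> e}"

lemma edge_cut_incident_edges:
  assumes "v \<in> fst G" "w \<in> fst G" "v \<noteq> w"
  shows "edge_cut G (incident_edges G v)"
proof -
  have "\<not> (adj (fst G, snd G - incident_edges G v))\<^sup>*\<^sup>* v w"
  proof
    assume "(adj (fst G, snd G - incident_edges G v))\<^sup>*\<^sup>* v w"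
    then have "w \<in> {v}"
      by (rule rtranclp_closed) (auto simp: adj_def incident_edges_def)
    with assms(3) show False by simp
  qed
  with assms(1,2) show ?thesis
    unfolding edge_cut_def connected_def incident_edges_def by auto
qed

lemma edge_cut_separates:
  assumes "edge_cut G F" "fst G \<noteq> {}"
  obtains A where "A \<subseteq> fst G" "A \<noteq> {}" "fst G - A \<noteq> {}"
    "\<And>a b. a \<in> A \<Longrightarrow> b \<in> fst G - A \<Longrightarrow> {a, b} \<in> snd G \<Longrightarrow> {a, b} \<in> F"
proof -
  let ?R = "adj (fst G, snd G - F)"
  obtain u w where uw: "u \<in> fst G" "w \<in> fst G" "\<not> ?R\<^sup>*\<^sup>* u w"
    using assms unfolding edge_cut_def connected_def by auto
  define A where "A = {x \<in> fst G. ?R\<^sup>*\<^sup>* u x}"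
  have "{a, b} \<in> F" if "a \<in> A" "b \<in> fst G - A" "{a, b} \<in> snd G" for a b
  proof (rule ccontr)
    assume "{a, b} \<notin> F"
    with that(3) have "?R a b" by (simp add: adj_def)
    with that(1) have "?R\<^sup>*\<^sup>* u b" unfolding A_def by (auto intro: rtranclp.rtrancl_into_rtrancl)
    with that(2) show False unfolding A_def by blast
  qed
  moreover have "u \<in> A" "w \<in> fst G - A" using uw unfolding A_def by auto
  ultimately show ?thesis using that[of A] unfolding A_def by blast
qed

lemma complete_incident_edges:
  assumes "graph G" "complete G" "v \<in> fst G"
  shows "incident_edges G v = (\<lambda>w. {v, w}) ` (fst G - {v})"
proof
  show "incident_edges G v \<subseteq> (\<lambda>w. {v, w}) ` (fst G - {v})"
  proof
    fix e assume e: "e \<in> incident_edges G v"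
    then have "card e = 2" "e \<subseteq> fst G" "v \<in> e"
      using assms(1) unfolding graph_def incident_edges_def by auto
    then obtain w where "e = {v, w}" "w \<noteq> v" "w \<in> fst G"
      by (auto simp: card_2_iff doubleton_eq_iff)
    then show "e \<in> (\<lambda>w. {v, w}) ` (fst G - {v})" by blast
  qed
  show "(\<lambda>w. {v, w}) ` (fst G - {v}) \<subseteq> incident_edges G v"
    using assms(2,3) unfolding complete_def adj_def incident_edges_def by auto
qed

lemma card_incident_edges_complete:
  assumes "graph G" "complete G" "v \<in> fst G"
  shows "card (incident_edges G v) = card (fst G) - 1"
proof -
  have "inj_on (\<lambda>w. {v, w}) (fst G - {v})" by (auto simp: inj_on_def doubleton_eq_iff)
  moreover have "finite (fst G)" using assms(1) unfolding graph_def by blast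
  ultimately show ?thesis
    using assms(3) by (simp add: complete_incident_edges[OF assms] card_image)
qed

lemma add_diff_one_le_mult:
  fixes a b :: nat
  assumes "1 \<le> a" "1 \<le> b"
  shows "a + b - 1 \<le> a * b"
  using assms by (cases a; cases b) auto

lemma mult_le_add_diff_one_imp:
  fixes a b :: nat
  assumes "1 \<le> a" "1 \<le> b" "a * b \<le> a + b - 1"
  shows "a = 1 \<or> b = 1"
  using assms by (cases a; cases b) auto

lemma complete_edge_cut_card:
  assumes "graph G" "complete G" "edge_cut G F" "fst G \<noteq> {}"
  shows "card (fst G) - 1 \<le> card F"
    and "card F \<le> card (fst G) - 1 \<Longrightarrow> \<exists>v\<in>fst G. F = incident_edges G v"
proof -
  let ?V = "fst G"
  obtain A where A: "A \<subseteq> ?V" "A \<noteq> {}" "?V - A \<noteq> {}"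
    and sep: "\<And>a b. a \<in> A \<Longrightarrow> b \<in> ?V - A \<Longrightarrow> {a, b} \<in> snd G \<Longrightarrow> {a, b} \<in> F"
    using edge_cut_separates[OF assms(3,4)] by blast
  have cross: "{a, b} \<in> F" if "a \<in> A" "b \<in> ?V - A" for a b
  proof -
    have "a \<noteq> b" "a \<in> ?V" "b \<in> ?V" using that A(1) by auto
    then have "{a, b} \<in> snd G" using assms(2) unfolding complete_def adj_def by blast
    then show ?thesis by (rule sep[OF that])
  qed
  have finV: "finite ?V" using assms(1) unfolding graph_def by blast
  have finF: "finite F"
    using assms(3) finite_edges[OF assms(1)] unfolding edge_cut_def by (blast intro: finite_subset)
  have "inj_on (\<lambda>(a, b). {a, b}) (A \<times> (?V - A))" by (auto simp: inj_on_def doubleton_eq_iff)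
  moreover have "(\<lambda>(a, b). {a, b}) ` (A \<times> (?V - A)) \<subseteq> F" using cross by auto
  ultimately have "card (A \<times> (?V - A)) \<le> card F" by (rule card_inj_on_le[OF _ _ finF])
  then have prod: "card A * card (?V - A) \<le> card F" by (simp add: card_cartesian_product)
  have finA: "finite A" using finite_subset[OF A(1) finV] .
  have sum: "card A + card (?V - A) = card ?V"
    using card_Diff_subset[OF finA A(1)] card_mono[OF finV A(1)] by linarith
  have pos: "1 \<le> card A" "1 \<le> card (?V - A)"
    using A(2,3) finA finV by (simp_all add: Suc_le_eq card_gt_0_iff)
  show "card ?V - 1 \<le> card F" using add_diff_one_le_mult[OF pos] prod sum by linarith
  assume small: "card F \<le> card ?V - 1"
  have star: "F = incident_edges G v" if "v \<in> ?V" "\<And>w. w \<in> ?V - {v} \<Longrightarrow> {v, w} \<in> F" for v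
  proof -
    have "incident_edges G v \<subseteq> F"
      using that by (auto simp: complete_incident_edges[OF assms(1,2)])
    moreover have "card (incident_edges G v) = card F"
      using card_mono[OF finF calculation] small card_incident_edges_complete[OF assms(1,2) that(1)]
      by linarith
    ultimately show ?thesis using card_subset_eq[OF finF] by blast
  qed
  have "card A = 1 \<or> card (?V - A) = 1"
    using mult_le_add_diff_one_imp[OF pos] prod sum small by linarith
  then show "\<exists>v\<in>?V. F = incident_edges G v"
  proof
    assume "card A = 1"
    then obtain a where "A = {a}" by (rule card_1_singletonE)
    then show ?thesis using A(1) cross star[of a] by blast
  next
    assume "card (?V - A) = 1"
    then obtain b where "?V - A = {b}" by (rule card_1_singletonE)
    then have "b \<in> ?V" "\<And>w. w \<in> ?V - {b} \<Longrightarrow> {b, w} \<in> F"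
      using cross by (auto simp: insert_commute)
    then show ?thesis using star by blast
  qed
qed

lemma edge_connectivity_le: "edge_cut G F \<Longrightarrow> edge_connectivity G \<le> card F"
  unfolding edge_connectivity_def by (auto intro: Least_le)

lemma complete_super_edge_connected:
  assumes "graph G" "connected G" "complete G"
  shows "super_edge_connected G"
proof -
  have "\<exists>v\<in>fst G. F = incident_edges G v" if "min_edge_cut G F" for F
  proof -
    have cut: "edge_cut G F" and F: "card F = edge_connectivity G"
      using that unfolding min_edge_cut_def by auto
    have ne: "fst G \<noteq> {}" using assms(2) unfolding connected_def by blast
    obtain v w where vw: "v \<in> fst G" "w \<in> fst G" "v \<noteq> w"
      using cut ne unfolding edge_cut_def connected_def by auto
    have "card F \<le> card (incident_edges G v)"
      using F edge_connectivity_le[OF edge_cut_incident_edges[OF vw]] by simp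
    then have "card F \<le> card (fst G) - 1"
      by (simp add: card_incident_edges_complete[OF assms(1,3) vw(1)])
    then show ?thesis using complete_edge_cut_card(2)[OF assms(1,3) cut ne] by blast
  qed
  then show ?thesis
    using assms(2) unfolding super_edge_connected_def incident_edges_def by blast
qed

lemma min_edge_cutI:
  assumes "edge_cut G F" "\<And>F'. edge_cut G F' \<Longrightarrow> card F \<le> card F'"
  shows "min_edge_cut G F"
  unfolding min_edge_cut_def edge_connectivity_def
  using assms by (auto intro!: Least_equality[symmetric])

lemma card_edge_cut_pos:
  assumes "graph G" "connected G" "edge_cut G F"
  shows "0 < card F"
proof -
  have "finite F"
    using assms(3) finite_edges[OF assms(1)] unfolding edge_cut_def by (blast intro: finite_subset)
  moreover have "F \<noteq> {}" using assms(2,3) unfolding edge_cut_def by auto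
  ultimately show ?thesis by (simp add: card_gt_0_iff)
qed

lemma graph_path_graph: "graph (path_graph n)"
  unfolding graph_def path_graph_def by auto

lemma connected_path_graph_4: "connected (path_graph 4)"
  by (rule connected_if_spanning_path4[of _ 0 1 2 3]) (auto simp: path_graph_4 adj_def)

lemma not_super_edge_connected_path_graph_4: "\<not> super_edge_connected (path_graph 4)"
proof
  define F :: "nat set set" where "F = {{1, 2}}"
  have "\<not> (adj (fst (path_graph 4), snd (path_graph 4) - F))\<^sup>*\<^sup>* 0 3"
  proof
    assume "(adj (fst (path_graph 4), snd (path_graph 4) - F))\<^sup>*\<^sup>* 0 3"
    then have "(3::nat) \<in> {0, 1}"
      by (rule rtranclp_closed) (auto simp: path_graph_4 adj_def F_def doubleton_eq_iff)
    then show False by simp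
  qed
  then have cut: "edge_cut (path_graph 4) F"
    unfolding edge_cut_def connected_def by (auto simp: path_graph_4 F_def)
  have "min_edge_cut (path_graph 4) F"
    using card_edge_cut_pos[OF graph_path_graph connected_path_graph_4]
    by (intro min_edge_cutI[OF cut]) (simp add: F_def Suc_le_eq)
  moreover assume "super_edge_connected (path_graph 4)"
  ultimately obtain v where "v \<in> fst (path_graph 4)" "F = {e \<in> snd (path_graph 4). v \<in> e}"
    unfolding super_edge_connected_def by blast
  then have "{0, 1} \<in> F \<or> {2, 3} \<in> F" by (auto simp: path_graph_4)
  then show False by (simp add: F_def doubleton_eq_iff)
qed

definition cycle4 :: "nat ugraph" where
  "cycle4 = ({0, 1, 2, 3}, {{0, 1}, {1, 2}, {2, 3}, {3, 0}})"

lemma graph_cycle4: "graph cycle4"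
  unfolding cycle4_def graph_def by auto

lemma connected_cycle4_minus_edge:
  assumes "e \<in> snd cycle4"
  shows "connected (fst cycle4, snd cycle4 - {e})"
proof -
  consider "e = {0, 1}" | "e = {1, 2}" | "e = {2, 3}" | "e = {3, 0}"
    using assms unfolding cycle4_def by auto
  then show ?thesis
  proof cases
    case 1 then show ?thesis
      by (intro connected_if_spanning_path4[of _ 1 2 3 0]) (auto simp: cycle4_def adj_def doubleton_eq_iff)
  next
    case 2 then show ?thesis
      by (intro connected_if_spanning_path4[of _ 2 3 0 1]) (auto simp: cycle4_def adj_def doubleton_eq_iff)
  next
    case 3 then show ?thesis
      by (intro connected_if_spanning_path4[of _ 3 0 1 2]) (auto simp: cycle4_def adj_def doubleton_eq_iff)
  next
    case 4 then show ?thesis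
      by (intro connected_if_spanning_path4[of _ 0 1 2 3]) (auto simp: cycle4_def adj_def doubleton_eq_iff)
  qed
qed

lemma connected_cycle4: "connected cycle4"
  by (rule connected_if_spanning_path4[of _ 0 1 2 3]) (auto simp: cycle4_def adj_def)

lemma not_super_edge_connected_cycle4: "\<not> super_edge_connected cycle4"
proof
  define F :: "nat set set" where "F = {{1, 2}, {3, 0}}"
  have "\<not> (adj (fst cycle4, snd cycle4 - F))\<^sup>*\<^sup>* 0 3"
  proof
    assume "(adj (fst cycle4, snd cycle4 - F))\<^sup>*\<^sup>* 0 3"
    then have "(3::nat) \<in> {0, 1}"
      by (rule rtranclp_closed) (auto simp: cycle4_def adj_def F_def doubleton_eq_iff)
    then show False by simp
  qed
  then have cut: "edge_cut cycle4 F"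
    unfolding edge_cut_def connected_def by (auto simp: cycle4_def F_def)
  have "2 \<le> card F'" if cut': "edge_cut cycle4 F'" for F'
  proof (rule ccontr)
    assume "\<not> 2 \<le> card F'"
    then have "card F' = 1" using card_edge_cut_pos[OF graph_cycle4 connected_cycle4 cut'] by linarith
    then obtain e where "F' = {e}" by (rule card_1_singletonE)
    then show False
      using cut' connected_cycle4_minus_edge[of e] unfolding edge_cut_def by auto
  qed
  moreover have "card F = 2" by (simp add: F_def doubleton_eq_iff)
  ultimately have "min_edge_cut cycle4 F" using min_edge_cutI[OF cut] by presburger
  moreover assume "super_edge_connected cycle4"
  ultimately obtain v where "v \<in> fst cycle4" "F = {e \<in> snd cycle4. v \<in> e}"
    unfolding super_edge_connected_def by blast
  then have "{0, 1} \<in> F \<or> {2, 3} \<in> F" by (auto simp: cycle4_def)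
  then show False by (simp add: F_def doubleton_eq_iff)
qed

lemma induced_subgraph_card_vertices:
  assumes "induced_subgraph S G" "finite (fst G)"
  shows "card (fst S) \<le> card (fst G)"
  using assms card_inj_on_le unfolding induced_subgraph_def by blast

lemma induced_subgraph_card_edges:
  assumes "graph S" "graph G" "induced_subgraph S G" "card (fst S) = card (fst G)"
  shows "card (snd S) = card (snd G)"
proof -
  obtain f where inj: "inj_on f (fst S)" and into: "f ` fst S \<subseteq> fst G"
    and adj_iff: "\<forall>u\<in>fst S. \<forall>v\<in>fst S. adj S u v \<longleftrightarrow> adj G (f u) (f v)"
    using assms(3) unfolding induced_subgraph_def by blast
  have onto: "f ` fst S = fst G"
    using assms(2,4) card_image[OF inj] into unfolding graph_def by (metis card_subset_eq)
  have edge: "{u, v} \<in> snd S \<longleftrightarrow> f ` {u, v} \<in> snd G" if "u \<in> fst S" "v \<in> fst S" for u v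
    using adj_iff that unfolding adj_def by auto
  have "snd G = image f ` snd S"
  proof (intro equalityI subsetI)
    fix e assume e: "e \<in> snd G"
    then obtain x y where "e = {x, y}" "x \<in> fst G" "y \<in> fst G"
      using assms(2) unfolding graph_def by (metis card_2_iff insert_subset)
    moreover obtain u v where uv: "u \<in> fst S" "v \<in> fst S" "x = f u" "y = f v"
      using onto \<open>x \<in> fst G\<close> \<open>y \<in> fst G\<close> by (metis imageE)
    ultimately have "e = f ` {u, v}" by auto
    moreover from this have "{u, v} \<in> snd S" using e edge[OF uv(1,2)] by simp
    ultimately show "e \<in> image f ` snd S" by blast
  next
    fix e assume "e \<in> image f ` snd S"
    then obtain e' where e': "e' \<in> snd S" "e = f ` e'" by blast
    then obtain u v where "e' = {u, v}" "u \<in> fst S" "v \<in> fst S"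
      using assms(1) unfolding graph_def by (metis card_2_iff insert_subset)
    with e' edge show "e \<in> snd G" by blast
  qed
  moreover have "inj_on (image f) (snd S)"
    using inj_on_image_Pow[OF inj] assms(1) unfolding graph_def by (auto intro: inj_on_subset)
  ultimately show ?thesis by (simp add: card_image)
qed

lemma induced_path_graph_triangle_free:
  assumes "induced_subgraph S (path_graph n)" "a \<in> fst S" "b \<in> fst S" "c \<in> fst S"
    and "adj S a b" "adj S b c"
  shows "\<not> adj S a c"
proof
  assume "adj S a c"
  obtain f where "\<forall>u\<in>fst S. \<forall>v\<in>fst S. adj S u v \<longleftrightarrow> adj (path_graph n) (f u) (f v)"
    using assms(1) unfolding induced_subgraph_def by blast
  then have "adj (path_graph n) (f a) (f b)" "adj (path_graph n) (f b) (f c)"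
    "adj (path_graph n) (f a) (f c)"
    using assms(2-6) \<open>adj S a c\<close> by blast+
  then show False unfolding adj_path_graph by presburger
qed

lemma small_triangle_free_induced_path3:
  assumes "graph S" "connected S" "card (fst S) \<le> 3"
    and triangle_free: "\<And>a b c. a \<in> fst S \<Longrightarrow> b \<in> fst S \<Longrightarrow> c \<in> fst S \<Longrightarrow>
      adj S a b \<Longrightarrow> adj S b c \<Longrightarrow> \<not> adj S a c"
  shows "induced_subgraph S (path_graph 3)"
proof -
  have neighbour: "\<exists>w\<in>fst S - {u}. adj S u w" if uv: "u \<in> fst S" "v \<in> fst S" "u \<noteq> v" for u v
  proof -
    obtain w where "adj S u w" using connected_has_neighbour[OF assms(1,2) uv] .
    with adj_in_vertices(2,3)[OF assms(1) this] show ?thesis by auto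
  qed
  have "0 < card (fst S)"
    using assms(1,2) unfolding graph_def connected_def by (simp add: card_gt_0_iff)
  then have "card (fst S) \<in> {1, 2, 3}" using assms(3) by auto
  then consider a where "fst S = {a}"
    | a b where "fst S = {a, b}" "a \<noteq> b"
    | a b c where "fst S = {a, b, c}" "a \<noteq> b" "b \<noteq> c" "a \<noteq> c"
    by (auto simp: card_1_singleton_iff card_2_iff card_3_iff)
  then show ?thesis
  proof cases
    case (1 a)
    show ?thesis unfolding induced_subgraph_def
      by (rule exI[of _ "\<lambda>_. 0"])
        (simp add: 1 adj_irrefl[OF assms(1)] vertices_path_graph adj_path_graph)
  next
    case (2 a b)
    then have "adj S a b" using neighbour[of a b] by auto
    then show ?thesis unfolding induced_subgraph_def using 2
      by (intro exI[of _ "\<lambda>x. if x = a then 0 else 1"])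
        (auto simp: adj_irrefl[OF assms(1)] vertices_path_graph adj_path_graph adj_commute)
  next
    case (3 a b c)
    have "adj S a b \<and> adj S b c \<and> \<not> adj S a c \<or> adj S b a \<and> adj S a c \<and> \<not> adj S b c
      \<or> adj S a c \<and> adj S c b \<and> \<not> adj S a b"
      using neighbour[of a b] neighbour[of b c] neighbour[of c a] triangle_free[of a b c] 3
      by (auto simp: adj_commute)
    moreover have "fst S = {b, a, c}" "fst S = {a, c, b}" using 3(1) by auto
    ultimately show ?thesis
      using induced_subgraph_path3I[OF assms(1)] 3 by metis
  qed
qed

lemma induced_path4_cycle4_imp_induced_path3:
  assumes "graph S" "connected S"
    and "induced_subgraph S (path_graph 4)" "induced_subgraph S cycle4"
  shows "induced_subgraph S (path_graph 3)"
proof (rule small_triangle_free_induced_path3[OF assms(1,2)])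
  have four: "card (fst (path_graph 4)) = 4" "card (fst cycle4) = 4"
    by (simp_all add: vertices_path_graph cycle4_def)
  have "card (snd (path_graph 4)) \<noteq> card (snd cycle4)"
    by (simp add: path_graph_4 cycle4_def doubleton_eq_iff)
  then have "card (fst S) \<noteq> 4"
    using induced_subgraph_card_edges[OF assms(1) graph_path_graph assms(3)]
      induced_subgraph_card_edges[OF assms(1) graph_cycle4 assms(4)] four by auto
  moreover have "card (fst S) \<le> 4"
    using induced_subgraph_card_vertices[OF assms(3)] four by (simp add: vertices_path_graph)
  ultimately show "card (fst S) \<le> 3" by linarith
qed (use induced_path_graph_triangle_free[OF assms(3)] in blast)

theorem theorem2p1:
  fixes S :: "'b ugraph"
  assumes "graph S" and "connected S"
  shows "(\<forall>G :: nat ugraph. graph G \<and> connected G \<and> free S G \<longrightarrow> super_edge_connected G)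
         \<longleftrightarrow> induced_subgraph S (path_graph 3)"
proof
  assume "\<forall>G :: nat ugraph. graph G \<and> connected G \<and> free S G \<longrightarrow> super_edge_connected G"
  then have "induced_subgraph S (path_graph 4)" "induced_subgraph S cycle4"
    using graph_path_graph connected_path_graph_4 not_super_edge_connected_path_graph_4
      graph_cycle4 connected_cycle4 not_super_edge_connected_cycle4
    unfolding free_def by blast+
  then show "induced_subgraph S (path_graph 3)"
    by (rule induced_path4_cycle4_imp_induced_path3[OF assms])
next
  assume S: "induced_subgraph S (path_graph 3)"
  show "\<forall>G :: nat ugraph. graph G \<and> connected G \<and> free S G \<longrightarrow> super_edge_connected G"
  proof (intro allI impI, elim conjE)
    fix G :: "nat ugraph"
    assume G: "graph G" "connected G" "free S G"
    then have "\<not> induced_subgraph (path_graph 3) G"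
      using induced_subgraph_trans[OF S] unfolding free_def by blast
    then show "super_edge_connected G"
      using complete_super_edge_connected connected_path3_free_complete G(1,2) by blast
  qed
qed

end
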